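(* Let $K=\mathbb{Q}(\gamma)$ be a number field of degree $n\ge2$ and let $f=a_nX^n+\dotsb+a_0\in\mathbb{Z}[X]$ be irreducible with $f(\gamma)=0$. For $0\le j\le n$ put $p_j=a_n\gamma^j+a_{n-1}\gamma^{j-1}+\dotsb+a_{n-j}$ and $q_j=a_j+a_{j-1}\gamma^{-1}+\dotsb+a_0\gamma^{-j}$, and let $M=\mathbb{Z}+\mathbb{Z}\gamma+\dotsb+\mathbb{Z}\gamma^{n-1}$, $D=\mathbb{Z}p_0+\dotsb+\mathbb{Z}p_{n-1}$, $N=\mathbb{Z}q_0+\dotsb+\mathbb{Z}q_{n-1}$. Then $$\mathrm{Bl}(\mathbb{Z}+\mathbb{Z}\gamma)=M:M=\mathbb{Z}[\gamma]\cap\mathbb{Z}[\gamma^{-1}]=\mathbb{Z}+N=\mathbb{Z}+D,$$ and $N$ and $D$ are coprime invertible integral ideals of this ring $A=\mathrm{Bl}(\mathbb{Z}+\mathbb{Z}\gamma)$ (i.e. ideals contained in $A$), with $A/N\cong\mathbb{Z}/a_0\mathbb{Z}$ and $A/D\cong\mathbb{Z}/a_n\mathbb{Z}$ as rings, such that $N:D=\gamma\cdot A$.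
   Context: All colon operations are taken inside $K$: for additive subgroups $I,J\subseteq K$, $I:J=\{x\in K: xJ\subseteq I\}$, $IJ$ is the group of finite sums of products, $I^0=I:I$, $I^{k+1}=I^kI$, and $\mathrm{Bl}(I)=\bigcup_{k\ge0}(I^k:I^k)$. Ideals $N,D$ of a commutative ring $A$ are coprime if $N+D=A$; an ideal $N$ of $A$ is invertible if there is an $A$-submodule $J\subseteq K$ with $NJ=A$. *)

theory Defs
  imports "HOL-Computational_Algebra.Polynomial" "HOL-Algebra.IntRing"
begin

definition numfield :: "complex \<Rightarrow> complex set" where
  "numfield \<gamma> = {poly (map_poly of_rat p) \<gamma> / poly (map_poly of_rat q) \<gamma> | p q.
                    poly (map_poly of_rat q) \<gamma> \<noteq> 0}"

definition colon :: "complex set \<Rightarrow> complex set \<Rightarrow> complex set \<Rightarrow> complex set" where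
  "colon K I J = {x \<in> K. \<forall>y\<in>J. x * y \<in> I}"

definition setmul :: "complex set \<Rightarrow> complex set \<Rightarrow> complex set" where
  "setmul I J = {sum_list (map (\<lambda>(x, y). x * y) ps) | ps. set ps \<subseteq> I \<times> J}"

definition setadd :: "complex set \<Rightarrow> complex set \<Rightarrow> complex set" where
  "setadd I J = {x + y | x y. x \<in> I \<and> y \<in> J}"

fun setpow :: "complex set \<Rightarrow> complex set \<Rightarrow> nat \<Rightarrow> complex set" where
  "setpow K I 0 = colon K I I"
| "setpow K I (Suc k) = setmul (setpow K I k) I"

definition Bl :: "complex set \<Rightarrow> complex set \<Rightarrow> complex set" where
  "Bl K I = (\<Union>k. colon K (setpow K I k) (setpow K I k))"

definition zspan :: "(nat \<Rightarrow> complex) \<Rightarrow> nat \<Rightarrow> complex set" where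
  "zspan g m = {\<Sum>j<m. of_int (c j) * g j | c. True}"

definition Zset :: "complex set" where
  "Zset = range of_int"

definition Zadj :: "complex \<Rightarrow> complex set" where
  "Zadj x = {poly (map_poly of_int p) x | p. True}"

definition subring_struct :: "complex set \<Rightarrow> complex ring" where
  "subring_struct A = \<lparr>carrier = A, monoid.mult = (*), one = 1, zero = 0, add = (+)\<rparr>"

definition is_submodule :: "complex set \<Rightarrow> complex set \<Rightarrow> complex set \<Rightarrow> bool" where
  "is_submodule K A J \<longleftrightarrow> J \<subseteq> K \<and> 0 \<in> J \<and> (\<forall>x\<in>J. \<forall>y\<in>J. x + y \<in> J)
     \<and> (\<forall>x\<in>J. - x \<in> J) \<and> (\<forall>a\<in>A. \<forall>x\<in>J. a * x \<in> J)"

definition invertible_ideal :: "complex set \<Rightarrow> complex set \<Rightarrow> complex set \<Rightarrow> bool" where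
  "invertible_ideal K A N \<longleftrightarrow> (\<exists>J. is_submodule K A J \<and> setmul N J = A)"

end

theory Submission
  imports Defs "HOL-Computational_Algebra.Polynomial_Factorial"
begin

text \<open>
  Write \<open>a\<^sub>i\<close> for the coefficients of \<open>f\<close>, \<open>W\<^sub>m = \<int> + \<int>\<gamma> + \<dots> + \<int>\<gamma>\<^sup>m\<^sup>-\<^sup>1\<close> (so \<open>M = W\<^sub>n\<close>)
  and \<open>A = \<int> + D\<close>. Multiplying \<open>f(\<gamma>) = 0\<close> by powers of \<open>\<gamma>\<close> gives
  \<open>\<gamma> p\<^sub>j = -q\<^sub>n\<^sub>-\<^sub>1\<^sub>-\<^sub>j\<close>, hence \<open>N = \<gamma>D\<close>, \<open>\<int> + N = A\<close> and \<open>A \<subseteq> \<int>[\<gamma>] \<inter> \<int>[\<gamma>\<^sup>-\<^sup>1]\<close>.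
  Since \<open>f\<close> divides every integer polynomial vanishing at \<open>\<gamma>\<close>, elements of
  \<open>\<int>[\<gamma>] \<inter> \<int>[\<gamma>\<^sup>-\<^sup>1]\<close> map \<open>M\<close> into itself. Conversely, the top coefficient of an element
  of \<open>M:M\<close> is divisible by \<open>a\<^sub>n\<close>, so it can be removed with a multiple of some \<open>p\<^sub>j\<close>, and by
  descent \<open>M:M \<subseteq> A\<close>. The powers of \<open>W\<^sub>2\<close> are the \<open>W\<^sub>k\<^sub>+\<^sub>1\<close>, whose multiplier rings lie in
  \<open>\<int>[\<gamma>] \<inter> \<int>[\<gamma>\<^sup>-\<^sup>1]\<close>, with equality for \<open>k = n - 1\<close>; this gives \<open>Bl(W\<^sub>2) = A\<close>.
  The coefficients of \<open>f\<close> lie in \<open>N + D\<close> and are coprime because \<open>f\<close> is primitive, so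
  \<open>N + D = A\<close>. Then \<open>A + \<gamma>\<^sup>-\<^sup>1A\<close> and \<open>A + \<gamma>A\<close> invert \<open>N\<close> and \<open>D\<close>, \<open>N:D = \<gamma>A\<close>, and an integer
  lies in \<open>N\<close> (resp. \<open>D\<close>) exactly when \<open>a\<^sub>0\<close> (resp. \<open>a\<^sub>n\<close>) divides it.
\<close>

section \<open>Integer polynomials evaluated at a complex number\<close>

definition ipoly :: "int poly \<Rightarrow> complex \<Rightarrow> complex" where
  "ipoly p x = poly (map_poly of_int p) x"

lemma map_poly_add_hom:
  assumes "f 0 = 0" "\<And>a b. f (a + b) = f a + f b"
  shows "map_poly f (p + q) = map_poly f p + map_poly f q"
  by (simp add: poly_eq_iff coeff_map_poly assms)

lemma map_poly_mult_hom:
  fixes f :: "'a::comm_semiring_1 \<Rightarrow> 'b::comm_semiring_1"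
  assumes "f 0 = 0" "\<And>a b. f (a + b) = f a + f b" "\<And>a b. f (a * b) = f a * f b"
  shows "map_poly f (p * q) = map_poly f p * map_poly f q"
  by (induct p) (simp_all add: map_poly_pCons map_poly_add_hom map_poly_smult assms)

lemma ipoly_add [simp]: "ipoly (p + q) x = ipoly p x + ipoly q x"
  and ipoly_mult [simp]: "ipoly (p * q) x = ipoly p x * ipoly q x"
  and ipoly_smult [simp]: "ipoly (smult c p) x = of_int c * ipoly p x"
  and ipoly_monom [simp]: "ipoly (monom c k) x = of_int c * x ^ k"
  and ipoly_const [simp]: "ipoly [:c:] x = of_int c"
  and ipoly_0 [simp]: "ipoly 0 x = 0"
  and ipoly_1 [simp]: "ipoly 1 x = 1"
  by (simp_all add: ipoly_def map_poly_add_hom map_poly_mult_hom map_poly_smult map_poly_monom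
      poly_monom map_poly_pCons)

lemma ipoly_uminus [simp]: "ipoly (- p) x = - ipoly p x"
  using ipoly_smult[of "-1" p x] by simp

lemma ipoly_diff [simp]: "ipoly (p - q) x = ipoly p x - ipoly q x"
  using ipoly_add[of p "- q" x] by simp

lemma ipoly_sum: "ipoly (\<Sum>i\<in>S. g i) x = (\<Sum>i\<in>S. ipoly (g i) x)"
  by (induct S rule: infinite_finite_induct) auto

lemma ipoly_eq_sum_coeffs:
  assumes "\<forall>i\<ge>m. coeff r i = 0"
  shows "ipoly r x = (\<Sum>i<m. of_int (coeff r i) * x ^ i)"
proof -
  have "ipoly r x = (\<Sum>i\<le>degree r. of_int (coeff r i) * x ^ i)"
    by (simp add: ipoly_def poly_altdef coeff_map_poly degree_map_poly)
  also have "\<dots> = (\<Sum>i<m. of_int (coeff r i) * x ^ i)"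
  proof (cases "r = 0")
    case False
    then have "degree r < m"
      using assms by (metis leading_coeff_0_iff not_le_imp_less)
    then show ?thesis
      by (intro sum.mono_neutral_cong_left) (auto simp: assms le_degree)
  qed simp
  finally show ?thesis .
qed

lemma coeff_sum_monom: "coeff (\<Sum>i<m. monom (c i) i) k = (if k < m then c k else 0)"
  by (simp add: coeff_sum coeff_monom)

lemma poly_cutoff_plus_shift:
  fixes p :: "'a::comm_semiring_1 poly"
  shows "p = poly_cutoff m p + monom 1 m * poly_shift m p"
  by (auto simp: poly_eq_iff coeff_poly_cutoff coeff_poly_shift coeff_monom_mult)

lemma coeff_mult_eq_0_above:
  assumes "\<forall>i\<ge>m. coeff h i = 0" "degree g + m \<le> j"
  shows "coeff (g * h) j = 0"
proof (cases "h = 0")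
  case False
  then have "degree h < m"
    using assms(1) by (metis leading_coeff_0_iff not_le_imp_less)
  then show ?thesis
    using degree_mult_le[of g h] assms(2) by (intro coeff_eq_0) linarith
qed simp

section \<open>Additive subgroups of \<open>\<complex>\<close>\<close>

definition zmodule :: "complex set \<Rightarrow> bool" where
  "zmodule S \<longleftrightarrow> 0 \<in> S \<and> (\<forall>x\<in>S. \<forall>y\<in>S. x + y \<in> S) \<and> (\<forall>c. \<forall>x\<in>S. of_int c * x \<in> S)"

lemma zmoduleI:
  assumes "0 \<in> S" "\<And>x y. x \<in> S \<Longrightarrow> y \<in> S \<Longrightarrow> x + y \<in> S"
    "\<And>c x. x \<in> S \<Longrightarrow> of_int c * x \<in> S"
  shows "zmodule S"
  using assms by (auto simp: zmodule_def)

context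
  fixes S assumes S: "zmodule S"
begin

lemma zmodule_zero: "0 \<in> S"
  and zmodule_add: "x \<in> S \<Longrightarrow> y \<in> S \<Longrightarrow> x + y \<in> S"
  and zmodule_of_int_mult: "x \<in> S \<Longrightarrow> of_int c * x \<in> S"
  using S by (auto simp: zmodule_def)

lemma zmodule_uminus: "x \<in> S \<Longrightarrow> - x \<in> S"
  using zmodule_of_int_mult[of x "-1"] by simp

lemma zmodule_diff: "x \<in> S \<Longrightarrow> y \<in> S \<Longrightarrow> x - y \<in> S"
  using zmodule_add[of x "- y"] zmodule_uminus[of y] by simp

lemma zmodule_of_int: "1 \<in> S \<Longrightarrow> of_int c \<in> S"
  using zmodule_of_int_mult[of 1 c] by simp

lemma zmodule_sum: "(\<And>i. i \<in> T \<Longrightarrow> h i \<in> S) \<Longrightarrow> sum h T \<in> S"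
  by (induct T rule: infinite_finite_induct) (auto intro: zmodule_zero zmodule_add)

end

lemma zmodule_Int: "zmodule S \<Longrightarrow> zmodule T \<Longrightarrow> zmodule (S \<inter> T)"
  unfolding zmodule_def by auto

lemma zmodule_multipliers:
  assumes "zmodule U"
  shows "zmodule {x. \<forall>y\<in>T. x * y \<in> U}" (is "zmodule ?S")
proof (rule zmoduleI)
  show "0 \<in> ?S"
    by (simp add: zmodule_zero[OF assms])
  show "x + x' \<in> ?S" if "x \<in> ?S" "x' \<in> ?S" for x x'
    using that zmodule_add[OF assms] by (simp add: distrib_right)
  show "of_int c * x \<in> ?S" if "x \<in> ?S" for c x
    using that zmodule_of_int_mult[OF assms] by (simp add: mult.assoc)
qed

lemma zmodule_preimage_mult:
  assumes "zmodule U"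
  shows "zmodule {y. c * y \<in> U}" (is "zmodule ?S")
proof (rule zmoduleI)
  show "0 \<in> ?S"
    by (simp add: zmodule_zero[OF assms])
  show "y + y' \<in> ?S" if "y \<in> ?S" "y' \<in> ?S" for y y'
    using that zmodule_add[OF assms] by (simp add: distrib_left)
  show "of_int k * y \<in> ?S" if "y \<in> ?S" for k y
    using that zmodule_of_int_mult[OF assms, of "c * y" k] by (simp add: mult.left_commute)
qed

lemma zmodule_image_mult:
  assumes "zmodule S"
  shows "zmodule ((\<lambda>x. c * x) ` S)" (is "zmodule ?cS")
proof (rule zmoduleI)
  show "0 \<in> ?cS"
    by (rule image_eqI[of _ _ 0]) (simp_all add: zmodule_zero[OF assms])
next
  fix u v assume "u \<in> ?cS" "v \<in> ?cS"
  then obtain x y where "x \<in> S" "y \<in> S" "u = c * x" "v = c * y"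
    by blast
  then show "u + v \<in> ?cS"
    using zmodule_add[OF assms] by (auto simp flip: distrib_left)
next
  fix k u assume "u \<in> ?cS"
  then obtain x where "x \<in> S" "u = c * x"
    by blast
  moreover have "of_int k * (c * x) = c * (of_int k * x)"
    by (simp add: ac_simps)
  ultimately show "of_int k * u \<in> ?cS"
    using zmodule_of_int_mult[OF assms] by auto
qed

lemma zmodule_colon: "zmodule K \<Longrightarrow> zmodule I \<Longrightarrow> zmodule (colon K I J)"
proof -
  have "colon K I J = K \<inter> {x. \<forall>y\<in>J. x * y \<in> I}"
    by (auto simp: colon_def)
  then show "zmodule K \<Longrightarrow> zmodule I \<Longrightarrow> zmodule (colon K I J)"
    by (simp add: zmodule_Int zmodule_multipliers)
qed

lemma colon_subset_self: "1 \<in> I \<Longrightarrow> colon K I I \<subseteq> I"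
  by (auto simp: colon_def dest: bspec[of _ _ 1])

lemma zmodule_Zset: "zmodule Zset"
proof (rule zmoduleI)
  show "0 \<in> Zset"
    unfolding Zset_def by (rule range_eqI[of _ _ 0]) simp
  show "x + y \<in> Zset" if "x \<in> Zset" "y \<in> Zset" for x y
    using that unfolding Zset_def by (auto intro: range_eqI[of _ _ "_ + _"])
  show "of_int c * x \<in> Zset" if "x \<in> Zset" for c x
    using that unfolding Zset_def by (auto intro: range_eqI[of _ _ "_ * _"])
qed

lemma of_int_in_Zset [simp]: "of_int k \<in> Zset"
  by (simp add: Zset_def)

lemma Zset_subset: "zmodule S \<Longrightarrow> 1 \<in> S \<Longrightarrow> Zset \<subseteq> S"
  unfolding Zset_def using zmodule_of_int by auto

lemma of_int_Gcd_mem: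
  assumes "finite T" "\<And>t. t \<in> T \<Longrightarrow> of_int t \<in> S" "zmodule S"
  shows "of_int (Gcd T) \<in> S"
  using assms
proof (induct T rule: finite_induct)
  case empty
  then show ?case by (simp add: zmodule_zero)
next
  case (insert a T)
  obtain u v where uv: "u * a + v * Gcd T = gcd a (Gcd T)"
    using bezout_int by blast
  have "of_int (Gcd (insert a T)) = of_int u * of_int a + of_int v * (of_int (Gcd T) :: complex)"
    by (simp add: uv[symmetric])
  moreover have "of_int a \<in> S" "of_int (Gcd T) \<in> S"
    using insert by auto
  ultimately show ?case
    using insert.prems(2) by (simp add: zmodule_add zmodule_of_int_mult)
qed

lemma setaddI: "x \<in> S \<Longrightarrow> y \<in> T \<Longrightarrow> x + y \<in> setadd S T"
  by (auto simp: setadd_def)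

lemma setaddE:
  "z \<in> setadd S T \<Longrightarrow> (\<And>x y. x \<in> S \<Longrightarrow> y \<in> T \<Longrightarrow> z = x + y \<Longrightarrow> P) \<Longrightarrow> P"
  by (auto simp: setadd_def)

lemma setadd_commute: "setadd S T = setadd T S"
  unfolding setadd_def by (blast intro: add.commute)

lemma setadd_subsetI: "S \<subseteq> U \<Longrightarrow> T \<subseteq> U \<Longrightarrow> zmodule U \<Longrightarrow> setadd S T \<subseteq> U"
  unfolding setadd_def by (blast intro: zmodule_add)

lemma subset_setadd_left: "0 \<in> T \<Longrightarrow> S \<subseteq> setadd S T"
  using setaddI[of _ S 0 T] by auto

lemma subset_setadd_right: "0 \<in> S \<Longrightarrow> T \<subseteq> setadd S T"
  using setaddI[of 0 S _ T] by auto

lemma zmodule_setadd: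
  assumes S: "zmodule S" and T: "zmodule T"
  shows "zmodule (setadd S T)"
proof (rule zmoduleI)
  show "0 \<in> setadd S T"
    using setaddI[OF zmodule_zero[OF S] zmodule_zero[OF T]] by simp
next
  fix z z' assume "z \<in> setadd S T" "z' \<in> setadd S T"
  then obtain x y x' y' where "x \<in> S" "y \<in> T" "x' \<in> S" "y' \<in> T" "z = x + y" "z' = x' + y'"
    by (auto elim!: setaddE)
  then show "z + z' \<in> setadd S T"
    using setaddI[OF zmodule_add[OF S] zmodule_add[OF T], of x x' y y'] by (simp add: ac_simps)
next
  fix c z assume "z \<in> setadd S T"
  then obtain x y where "x \<in> S" "y \<in> T" "z = x + y"
    by (auto elim!: setaddE)
  then show "of_int c * z \<in> setadd S T"
    using setaddI[OF zmodule_of_int_mult[OF S] zmodule_of_int_mult[OF T]] by (simp add: distrib_left)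
qed

lemma setmul_subsetI:
  assumes "zmodule U" "\<And>x y. x \<in> S \<Longrightarrow> y \<in> T \<Longrightarrow> x * y \<in> U"
  shows "setmul S T \<subseteq> U"
proof
  fix z assume "z \<in> setmul S T"
  then obtain ps where ps: "z = sum_list (map (\<lambda>(x, y). x * y) ps)" "set ps \<subseteq> S \<times> T"
    by (auto simp: setmul_def)
  from ps(2) have "sum_list (map (\<lambda>(x, y). x * y) ps) \<in> U"
    by (induct ps) (auto simp: assms zmodule_zero zmodule_add)
  then show "z \<in> U"
    using ps by simp
qed

lemma mult_mem_setmul: "x \<in> S \<Longrightarrow> y \<in> T \<Longrightarrow> x * y \<in> setmul S T"
  unfolding setmul_def by (rule CollectI, rule exI[of _ "[(x, y)]"]) auto

lemma zmodule_setmul: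
  assumes "zmodule T"
  shows "zmodule (setmul S T)"
proof (rule zmoduleI)
  show "0 \<in> setmul S T"
    unfolding setmul_def by (rule CollectI, rule exI[of _ "[]"]) simp
next
  fix x y assume "x \<in> setmul S T" "y \<in> setmul S T"
  then obtain ps qs where "x = sum_list (map (\<lambda>(x, y). x * y) ps)" "set ps \<subseteq> S \<times> T"
    "y = sum_list (map (\<lambda>(x, y). x * y) qs)" "set qs \<subseteq> S \<times> T"
    by (auto simp: setmul_def)
  then show "x + y \<in> setmul S T"
    unfolding setmul_def by (intro CollectI exI[of _ "ps @ qs"]) auto
next
  fix c x assume "x \<in> setmul S T"
  then obtain ps where ps: "x = sum_list (map (\<lambda>(x, y). x * y) ps)" "set ps \<subseteq> S \<times> T"
    by (auto simp: setmul_def)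
  let ?ps = "map (\<lambda>(x, y). (x, of_int c * y)) ps"
  have "set ?ps \<subseteq> S \<times> T"
    using ps(2) zmodule_of_int_mult[OF assms] by auto
  moreover have "of_int c * x = sum_list (map (\<lambda>(x, y). x * y) ?ps)"
    unfolding ps(1) by (induct ps) (auto simp: algebra_simps)
  ultimately show "of_int c * x \<in> setmul S T"
    unfolding setmul_def by blast
qed

lemma zmodule_zspan: "zmodule (zspan g m)"
proof (rule zmoduleI)
  show "0 \<in> zspan g m"
    unfolding zspan_def by (rule CollectI, rule exI[of _ "\<lambda>_. 0"]) simp
next
  fix x y assume "x \<in> zspan g m" "y \<in> zspan g m"
  then obtain c d where "x = (\<Sum>j<m. of_int (c j) * g j)" "y = (\<Sum>j<m. of_int (d j) * g j)"
    by (auto simp: zspan_def)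
  then show "x + y \<in> zspan g m"
    unfolding zspan_def by (intro CollectI exI[of _ "\<lambda>j. c j + d j"]) (simp add: sum.distrib algebra_simps)
next
  fix k x assume "x \<in> zspan g m"
  then obtain c where "x = (\<Sum>j<m. of_int (c j) * g j)"
    by (auto simp: zspan_def)
  then show "of_int k * x \<in> zspan g m"
    unfolding zspan_def by (intro CollectI exI[of _ "\<lambda>j. k * c j"]) (simp add: sum_distrib_left algebra_simps)
qed

lemma zspan_generator:
  assumes "i < m"
  shows "g i \<in> zspan g m"
proof -
  have "(\<Sum>j<m. of_int (if j = i then 1 else 0) * g j) = g i"
    using assms by (simp add: if_distrib if_distribR sum.delta cong: if_cong)
  then show ?thesis
    unfolding zspan_def by (intro CollectI exI[of _ "\<lambda>j. if j = i then 1 else 0"]) simp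
qed

lemma zspan_subsetI: "zmodule S \<Longrightarrow> (\<And>i. i < m \<Longrightarrow> g i \<in> S) \<Longrightarrow> zspan g m \<subseteq> S"
  unfolding zspan_def by (auto intro!: zmodule_sum zmodule_of_int_mult)

lemma zspan_mono: "m \<le> m' \<Longrightarrow> zspan g m \<subseteq> zspan g m'"
  by (rule zspan_subsetI[OF zmodule_zspan]) (auto intro: zspan_generator)

lemma zspan_mult_zspan:
  assumes "zmodule U" "\<And>i j. i < m \<Longrightarrow> j < m' \<Longrightarrow> g i * h j \<in> U"
    and "x \<in> zspan g m" "y \<in> zspan h m'"
  shows "x * y \<in> U"
proof -
  have "zspan g m \<subseteq> {x. \<forall>y\<in>zspan h m'. x * y \<in> U}"
  proof (rule zspan_subsetI[OF zmodule_multipliers[OF assms(1)]])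
    fix i assume "i < m"
    have "zspan h m' \<subseteq> {y. g i * y \<in> U}"
      by (rule zspan_subsetI[OF zmodule_preimage_mult[OF assms(1)]]) (use \<open>i < m\<close> assms(2) in auto)
    then show "g i \<in> {x. \<forall>y\<in>zspan h m'. x * y \<in> U}"
      by blast
  qed
  then show ?thesis
    using assms(3,4) by blast
qed

lemma zspan_SucE:
  assumes "x \<in> zspan g (Suc m)"
  obtains y c where "y \<in> zspan g m" "x = y + of_int c * g m"
proof -
  obtain c where "x = (\<Sum>j<Suc m. of_int (c j) * g j)"
    using assms by (auto simp: zspan_def)
  then have "x = (\<Sum>j<m. of_int (c j) * g j) + of_int (c m) * g m"
    by simp
  then show ?thesis
    by (rule that[rotated]) (auto simp: zspan_def)
qed

lemma pow_mem_zspan_powers: "k < m \<Longrightarrow> x ^ k \<in> zspan (\<lambda>i. x ^ i) m"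
  by (rule zspan_generator)

lemma mem_zspan_powers_iff:
  "y \<in> zspan (\<lambda>i. x ^ i) m \<longleftrightarrow> (\<exists>r. (\<forall>i\<ge>m. coeff r i = 0) \<and> ipoly r x = y)"
proof
  assume "y \<in> zspan (\<lambda>i. x ^ i) m"
  then obtain c where c: "y = (\<Sum>j<m. of_int (c j) * x ^ j)"
    by (auto simp: zspan_def)
  show "\<exists>r. (\<forall>i\<ge>m. coeff r i = 0) \<and> ipoly r x = y"
    by (rule exI[of _ "\<Sum>i<m. monom (c i) i"]) (simp add: coeff_sum_monom ipoly_sum c)
next
  assume "\<exists>r. (\<forall>i\<ge>m. coeff r i = 0) \<and> ipoly r x = y"
  then show "y \<in> zspan (\<lambda>i. x ^ i) m"
    by (auto simp: zspan_def ipoly_eq_sum_coeffs)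
qed

lemma mult_zspan_powers:
  assumes "y \<in> zspan (\<lambda>i. x ^ i) (Suc a)" "z \<in> zspan (\<lambda>i. x ^ i) (Suc b)"
  shows "y * z \<in> zspan (\<lambda>i. x ^ i) (Suc (a + b))"
  by (rule zspan_mult_zspan[OF zmodule_zspan _ assms])
     (auto simp flip: power_add intro: pow_mem_zspan_powers)

lemma pow_mult_zspan_powers:
  assumes "y \<in> zspan (\<lambda>i. x ^ i) m"
  shows "x ^ k * y \<in> zspan (\<lambda>i. x ^ i) (m + k)"
proof -
  have "zspan (\<lambda>i. x ^ i) m \<subseteq> {y. x ^ k * y \<in> zspan (\<lambda>i. x ^ i) (m + k)}"
    by (rule zspan_subsetI[OF zmodule_preimage_mult[OF zmodule_zspan]])
       (auto simp flip: power_add intro: pow_mem_zspan_powers)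
  then show ?thesis
    using assms by blast
qed

lemma pow_mult_zspan_inverse_powers:
  assumes "x \<noteq> 0" "y \<in> zspan (\<lambda>i. inverse x ^ i) (Suc m)"
  shows "x ^ m * y \<in> zspan (\<lambda>i. x ^ i) (Suc m)"
proof -
  have "x ^ m * inverse x ^ k \<in> zspan (\<lambda>i. x ^ i) (Suc m)" if "k < Suc m" for k
  proof -
    have "x ^ m * inverse x ^ k = x ^ (m - k)"
      using that assms(1) by (simp add: power_diff power_inverse field_simps)
    then show ?thesis
      by (simp add: pow_mem_zspan_powers)
  qed
  then have "zspan (\<lambda>i. inverse x ^ i) (Suc m) \<subseteq> {y. x ^ m * y \<in> zspan (\<lambda>i. x ^ i) (Suc m)}"
    by (intro zspan_subsetI[OF zmodule_preimage_mult[OF zmodule_zspan]]) auto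
  then show ?thesis
    using assms(2) by blast
qed

lemma Zadj_eq_range: "Zadj x = range (\<lambda>p. ipoly p x)"
  by (auto simp: Zadj_def ipoly_def)

lemma Zadj_iff_zspan: "y \<in> Zadj x \<longleftrightarrow> (\<exists>m. y \<in> zspan (\<lambda>i. x ^ i) m)"
proof
  assume "y \<in> Zadj x"
  then obtain r where r: "y = ipoly r x"
    by (auto simp: Zadj_eq_range)
  have "\<forall>i\<ge>Suc (degree r). coeff r i = 0"
    by (auto intro: coeff_eq_0)
  then show "\<exists>m. y \<in> zspan (\<lambda>i. x ^ i) m"
    unfolding mem_zspan_powers_iff r by blast
qed (auto simp: mem_zspan_powers_iff Zadj_eq_range)

lemma zspan_powers_subset_Zadj: "zspan (\<lambda>i. x ^ i) m \<subseteq> Zadj x"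
  using Zadj_iff_zspan by blast

lemma pow_in_Zadj: "x ^ k \<in> Zadj x"
  using zspan_powers_subset_Zadj pow_mem_zspan_powers[of k "Suc k" x] by blast

lemma Zadj_mult: "y \<in> Zadj x \<Longrightarrow> z \<in> Zadj x \<Longrightarrow> y * z \<in> Zadj x"
  unfolding Zadj_eq_range by (auto intro: range_eqI[of _ _ "_ * _"])

lemma zmodule_Zadj: "zmodule (Zadj x)"
  unfolding Zadj_eq_range
  by (rule zmoduleI) (auto intro: range_eqI[of _ _ 0] range_eqI[of _ _ "_ + _"] range_eqI[of _ _ "smult _ _"])

lemma of_int_in_Zadj: "of_int k \<in> Zadj x"
  unfolding Zadj_eq_range by (rule range_eqI[of _ _ "[:k:]"]) simp

lemma numfieldI:
  "poly (map_poly of_rat q) x \<noteq> 0 \<Longrightarrow>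
     poly (map_poly of_rat p) x / poly (map_poly of_rat q) x \<in> numfield x"
  unfolding numfield_def by blast

lemma numfieldE:
  assumes "y \<in> numfield x"
  obtains p q where "poly (map_poly of_rat q) x \<noteq> 0"
    "y = poly (map_poly of_rat p) x / poly (map_poly of_rat q) x"
  using assms unfolding numfield_def by blast

lemma map_poly_of_rat_add: "map_poly (of_rat :: rat \<Rightarrow> complex) (p + q) = map_poly of_rat p + map_poly of_rat q"
  and map_poly_of_rat_mult: "map_poly (of_rat :: rat \<Rightarrow> complex) (p * q) = map_poly of_rat p * map_poly of_rat q"
  by (simp_all add: map_poly_add_hom map_poly_mult_hom of_rat_add of_rat_mult)

lemma numfield_add: "y \<in> numfield x \<Longrightarrow> z \<in> numfield x \<Longrightarrow> y + z \<in> numfield x"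
  and numfield_mult: "y \<in> numfield x \<Longrightarrow> z \<in> numfield x \<Longrightarrow> y * z \<in> numfield x"
proof -
  let ?ev = "\<lambda>p. poly (map_poly (of_rat :: rat \<Rightarrow> complex) p) x"
  assume "y \<in> numfield x" "z \<in> numfield x"
  then obtain p q p' q' where q: "?ev q \<noteq> 0" "?ev q' \<noteq> 0"
    and yz: "y = ?ev p / ?ev q" "z = ?ev p' / ?ev q'"
    by (elim numfieldE)
  have "y + z = ?ev (p * q' + p' * q) / ?ev (q * q')"
    using q by (simp add: yz map_poly_of_rat_add map_poly_of_rat_mult add_frac_eq)
  moreover have "y * z = ?ev (p * p') / ?ev (q * q')"
    by (simp add: yz map_poly_of_rat_mult)
  moreover have "?ev (q * q') \<noteq> 0"
    using q by (simp add: map_poly_of_rat_mult)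
  ultimately show "y + z \<in> numfield x" "y * z \<in> numfield x"
    by (simp_all add: numfieldI)
qed

lemma inverse_in_numfield: "x \<noteq> 0 \<Longrightarrow> inverse x \<in> numfield x"
  using numfieldI[of "[:0, 1:]" x 1] by (simp add: map_poly_pCons field_simps)

lemma Zadj_subset_numfield: "Zadj x \<subseteq> numfield x"
proof
  fix y assume "y \<in> Zadj x"
  then obtain r where "y = poly (map_poly of_int r) x"
    by (auto simp: Zadj_def)
  also have "map_poly of_int r = map_poly (of_rat :: rat \<Rightarrow> complex) (map_poly of_int r)"
    by (simp add: map_poly_map_poly comp_def)
  finally show "y \<in> numfield x"
    using numfieldI[of 1 x] by simp
qed

lemma one_in_colon_numfield: "1 \<in> colon (numfield x) I I"
  using Zadj_subset_numfield of_int_in_Zadj[of 1 x] by (auto simp: colon_def)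

lemma zmodule_numfield: "zmodule (numfield x)"
proof (rule zmoduleI)
  have int: "of_int c \<in> numfield x" for c
    using of_int_in_Zadj Zadj_subset_numfield by blast
  show "0 \<in> numfield x"
    using int[of 0] by simp
  show "of_int c * y \<in> numfield x" if "y \<in> numfield x" for c y
    using numfield_mult[OF int that] .
qed (rule numfield_add)

lemma subring_struct_simps [simp]:
  "carrier (subring_struct A) = A" "mult (subring_struct A) = (*)"
  "one (subring_struct A) = 1" "zero (subring_struct A) = 0" "add (subring_struct A) = (+)"
  by (simp_all add: subring_struct_def)

lemma ring_subring_struct:
  assumes "zmodule A" "1 \<in> A" "\<And>x y. x \<in> A \<Longrightarrow> y \<in> A \<Longrightarrow> x * y \<in> A"
  shows "ring (subring_struct A)"
proof (rule ringI)
  show "abelian_group (subring_struct A)"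
    by (rule abelian_groupI)
       (auto simp: assms zmodule_zero zmodule_add intro!: bexI[of _ "- _"] zmodule_uminus)
  show "monoid (subring_struct A)"
    by (rule monoidI) (auto simp: assms)
qed (auto simp: algebra_simps)

lemma ideal_subring_struct:
  assumes "ring (subring_struct A)" "N \<subseteq> A" "zmodule N"
    "\<And>x y. x \<in> A \<Longrightarrow> y \<in> N \<Longrightarrow> x * y \<in> N"
  shows "ideal N (subring_struct A)"
proof (rule idealI)
  interpret ring "subring_struct A" by fact
  show "subgroup N (add_monoid (subring_struct A))"
  proof
    fix x assume x: "x \<in> N"
    then have "x \<in> A" "- x \<in> A"
      using assms(2,3) zmodule_uminus by auto
    then have "\<ominus>\<^bsub>subring_struct A\<^esub> x = - x"
      by (intro minus_equality) auto
    then show "inv\<^bsub>add_monoid (subring_struct A)\<^esub> x \<in> N"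
      using x assms(3) by (simp add: a_inv_def zmodule_uminus)
  qed (use assms in \<open>auto simp: zmodule_zero zmodule_add\<close>)
next
  fix a x assume "a \<in> N" "x \<in> carrier (subring_struct A)"
  then show "x \<otimes>\<^bsub>subring_struct A\<^esub> a \<in> N" "a \<otimes>\<^bsub>subring_struct A\<^esub> x \<in> N"
    using assms(4)[of x a] by (simp_all add: mult.commute)
qed (fact assms(1))

lemma a_r_coset_subring_struct: "N +>\<^bsub>subring_struct A\<^esub> x = (\<lambda>h. h + x) ` N"
  by (auto simp: a_r_coset_def r_coset_def)

lemma subring_struct_Quot_iso_ZFact:
  assumes R: "ring (subring_struct A)" and I: "ideal N (subring_struct A)"
    and ints: "\<And>k. of_int k \<in> A"
    and surj: "\<And>x. x \<in> A \<Longrightarrow> \<exists>k. x - of_int k \<in> N"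
    and ker: "\<And>k. of_int k \<in> N \<longleftrightarrow> c dvd k"
  shows "subring_struct A Quot N \<simeq> ZFact c"
proof -
  let ?S = "subring_struct A Quot N"
  let ?h = "\<lambda>k::int. N +>\<^bsub>subring_struct A\<^esub> (of_int k :: complex)"
  interpret ideal N "subring_struct A" by fact
  have N_zero: "0 \<in> N"
    using additive_subgroup.zero_closed[OF additive_subgroup_axioms] by simp
  have N_add: "x + y \<in> N" if "x \<in> N" "y \<in> N" for x y
    using additive_subgroup.a_closed[OF additive_subgroup_axioms] that by simp
  have N_uminus: "- x \<in> N" if "x \<in> N" for x
    using I_l_closed[OF that, of "of_int (-1)"] ints[of "-1"] by simp
  have coset_eq: "(\<lambda>h. h + x) ` N = (\<lambda>h. h + y) ` N" if "x - y \<in> N" for x y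
  proof (intro equalityI image_subsetI)
    show "h + x \<in> (\<lambda>h. h + y) ` N" if "h \<in> N" for h
      using N_add[OF \<open>h \<in> N\<close> \<open>x - y \<in> N\<close>] by (intro image_eqI[of _ _ "h + (x - y)"]) auto
    show "h + y \<in> (\<lambda>h. h + x) ` N" if "h \<in> N" for h
      using N_add[OF \<open>h \<in> N\<close> N_uminus[OF \<open>x - y \<in> N\<close>]] by (intro image_eqI[of _ _ "h + - (x - y)"]) auto
  qed
  have hom: "?h \<in> ring_hom \<Z> ?S"
  proof -
    have "(\<lambda>k::int. of_int k :: complex) \<in> ring_hom \<Z> (subring_struct A)"
      by (rule ring_hom_memI) (auto simp: ints)
    then show ?thesis
      using ring_hom_trans[OF _ rcos_ring_hom] by (simp add: comp_def)
  qed
  have img: "?h ` carrier \<Z> = carrier ?S"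
  proof
    show "?h ` carrier \<Z> \<subseteq> carrier ?S"
      using ring_hom_closed[OF hom] by auto
    show "carrier ?S \<subseteq> ?h ` carrier \<Z>"
    proof
      fix X assume "X \<in> carrier ?S"
      then obtain x where x: "x \<in> A" "X = N +>\<^bsub>subring_struct A\<^esub> x"
        by (auto simp: FactRing_def A_RCOSETS_def RCOSETS_def a_r_coset_def)
      obtain k where "x - of_int k \<in> N"
        using surj[OF x(1)] by blast
      then have "X = ?h k"
        using x(2) coset_eq by (simp add: a_r_coset_subring_struct)
      then show "X \<in> ?h ` carrier \<Z>"
        by simp
    qed
  qed
  have "?h k = N \<longleftrightarrow> c dvd k" for k
  proof -
    have "?h k = N \<longleftrightarrow> of_int k \<in> N"
    proof
      assume "?h k = N"
      moreover have "0 + of_int k \<in> (\<lambda>h. h + of_int k) ` N"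
        using N_zero by (intro imageI)
      ultimately show "of_int k \<in> N"
        by (simp add: a_r_coset_subring_struct)
    next
      assume "of_int k \<in> N"
      then have "(\<lambda>h. h + of_int k) ` N = (\<lambda>h. h + 0) ` N"
        by (intro coset_eq) simp
      then show "?h k = N"
        by (simp add: a_r_coset_subring_struct)
    qed
    then show ?thesis
      using ker by simp
  qed
  then have "a_kernel \<Z> ?S ?h = Idl\<^bsub>\<Z>\<^esub> {c}"
    by (auto simp: a_kernel_def' int_Idl FactRing_def dvd_def mult.commute)
  then have "ZFact c \<simeq> ?S"
    using ring_hom_ring.FactRing_iso[OF ring_hom_ringI2[OF int.ring_axioms quotient_is_ring hom] img]
    by (simp add: ZFact_def)
  then show ?thesis
    by (rule ring_iso_sym[OF cring.axioms(1)[OF ZFact_is_cring]])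
qed

text \<open>The inverse of \<open>X\<close> is \<open>A + cA\<close>.\<close>

lemma invertible_idealI:
  assumes K: "\<And>x y. x \<in> K \<Longrightarrow> y \<in> K \<Longrightarrow> x + y \<in> K" "\<And>x y. x \<in> K \<Longrightarrow> y \<in> K \<Longrightarrow> x * y \<in> K"
    and A: "zmodule A" "1 \<in> A" "\<And>x y. x \<in> A \<Longrightarrow> y \<in> A \<Longrightarrow> x * y \<in> A" "A \<subseteq> K"
    and c: "c \<in> K" and X: "zmodule X" "setadd X ((\<lambda>x. c * x) ` X) = A"
  shows "invertible_ideal K A X"
proof -
  define J where "J = setadd A ((\<lambda>x. c * x) ` A)"
  have J_iff: "z \<in> J \<longleftrightarrow> (\<exists>r\<in>A. \<exists>r'\<in>A. z = r + c * r')" for z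
    by (auto simp: J_def setadd_def)
  have X_A: "x \<in> A" "c * x \<in> A" if "x \<in> X" for x
    using that X subset_setadd_left[of "(\<lambda>x. c * x) ` X" X] subset_setadd_right[of X "(\<lambda>x. c * x) ` X"]
      zmodule_zero[OF X(1)] by force+
  have "is_submodule K A J"
    unfolding is_submodule_def
  proof (intro conjI ballI)
    show "J \<subseteq> K"
      using A(4) c K by (auto simp: J_iff) (meson subsetD)
    show "0 \<in> J"
      using zmodule_zero[OF A(1)] by (force simp: J_iff)
    fix x assume "x \<in> J"
    then obtain r r' where rr: "r \<in> A" "r' \<in> A" "x = r + c * r'"
      by (auto simp: J_iff)
    show "- x \<in> J"
      unfolding J_iff using rr zmodule_uminus[OF A(1)] by (intro bexI[of _ "- r"] bexI[of _ "- r'"]) auto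
    show "x + y \<in> J" if "y \<in> J" for y
    proof -
      obtain s s' where "s \<in> A" "s' \<in> A" "y = s + c * s'"
        using \<open>y \<in> J\<close> by (auto simp: J_iff)
      then show ?thesis
        unfolding J_iff using rr zmodule_add[OF A(1)]
        by (intro bexI[of _ "r + s"] bexI[of _ "r' + s'"]) (auto simp: algebra_simps)
    qed
    show "a * x \<in> J" if "a \<in> A" for a
      unfolding J_iff using rr A(3) that
      by (intro bexI[of _ "a * r"] bexI[of _ "a * r'"]) (auto simp: algebra_simps)
  qed
  moreover have "setmul X J = A"
  proof
    show "setmul X J \<subseteq> A"
    proof (rule setmul_subsetI[OF A(1)])
      fix x y assume "x \<in> X" "y \<in> J"
      then obtain r r' where "r \<in> A" "r' \<in> A" "y = r + c * r'"
        by (auto simp: J_iff)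
      then have "x * y = x * r + (c * x) * r'"
        by (simp add: algebra_simps)
      then show "x * y \<in> A"
        using X_A[OF \<open>x \<in> X\<close>] \<open>r \<in> A\<close> \<open>r' \<in> A\<close> A(3) zmodule_add[OF A(1)] by metis
    qed
    show "A \<subseteq> setmul X J"
    proof
      fix z assume "z \<in> A"
      then obtain x x' where "x \<in> X" "x' \<in> X" "z = x * 1 + x' * c"
        using X(2) by (auto simp: setadd_def mult.commute)
      moreover have "1 \<in> J" "c \<in> J"
        using A(2) zmodule_zero[OF A(1)] by (force simp: J_iff)+
      ultimately show "z \<in> setmul X J"
        unfolding setmul_def by (intro CollectI exI[of _ "[(x, 1), (x', c)]"]) auto
    qed
  qed
  ultimately show ?thesis
    by (auto simp: invertible_ideal_def)
qed

section \<open>A root of an irreducible integer polynomial\<close>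

lemma minimal_root_poly_dvd_smult:
  assumes h: "h \<noteq> 0" "ipoly h x = 0"
    and minimal: "\<And>g. g \<noteq> 0 \<Longrightarrow> ipoly g x = 0 \<Longrightarrow> degree h \<le> degree g"
    and g: "ipoly g x = 0"
  obtains b where "b \<noteq> 0" "h dvd smult b g"
proof -
  obtain b q where bq: "b \<noteq> 0" "smult b g = h * q + pseudo_mod g h"
    using pseudo_mod(1)[OF h(1)] by blast
  have "ipoly (pseudo_mod g h) x = 0"
    using arg_cong[OF bq(2), of "\<lambda>p. ipoly p x"] g h by simp
  moreover have "pseudo_mod g h = 0 \<or> degree (pseudo_mod g h) < degree h"
    using pseudo_mod(2)[OF h(1)] by blast
  ultimately have "pseudo_mod g h = 0"
    using minimal by fastforce
  then show ?thesis
    using bq by (intro that[of b]) auto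
qed

locale irreducible_root =
  fixes f :: "int poly" and \<gamma> :: complex and n :: nat
  assumes degree_f: "degree f = n" and two_le_n: "2 \<le> n"
    and irreducible_f: "irreducible f" and root: "ipoly f \<gamma> = 0"
begin

lemma f_nonzero: "f \<noteq> 0"
  using irreducible_f by auto

lemma not_dvd_const: "\<not> f dvd [:c:]" if "c \<noteq> 0"
  using dvd_imp_degree_le[of f "[:c:]"] that degree_f two_le_n by auto

lemma dvd_smult_imp_dvd:
  assumes "f dvd smult c g" "c \<noteq> 0"
  shows "f dvd g"
proof -
  have "smult c g = [:c:] * g"
    by simp
  then show ?thesis
    using assms irreducible_imp_prime_elem[OF irreducible_f] not_dvd_const
    by (metis prime_elem_dvd_mult_iff)
qed

lemma gamma_nonzero: "\<gamma> \<noteq> 0"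
proof
  assume "\<gamma> = 0"
  then have "coeff f 0 = 0"
    using root by (simp add: ipoly_def poly_0_coeff_0 coeff_map_poly)
  then obtain g where g: "f = [:0, 1:] * g"
    using dvd_iff_poly_eq_0[of 0 f] by (auto simp: poly_0_coeff_0 elim: dvdE)
  moreover have "\<not> is_unit ([:0, 1:] :: int poly)"
    by (auto simp: is_unit_poly_iff)
  ultimately have "is_unit g"
    using irreducible_f by (metis irreducibleD)
  then have "degree f \<le> 1"
    using g degree_mult_le[of "[:0, 1:]" g] by (auto simp: is_unit_poly_iff)
  then show False
    using degree_f two_le_n by simp
qed

lemma dvd_of_root:
  assumes "ipoly g \<gamma> = 0"
  shows "f dvd g"
proof -
  obtain h where h: "h \<noteq> 0 \<and> ipoly h \<gamma> = 0"
    and minimal: "\<And>g. g \<noteq> 0 \<and> ipoly g \<gamma> = 0 \<Longrightarrow> degree h \<le> degree g"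
    using ex_has_least_nat[of "\<lambda>h. h \<noteq> 0 \<and> ipoly h \<gamma> = 0" f degree] f_nonzero root by blast
  obtain a where a: "a \<noteq> 0" "h dvd smult a f"
    using minimal_root_poly_dvd_smult[of h \<gamma> f] h minimal root by blast
  then obtain q where q: "smult a f = h * q"
    by (elim dvdE)
  have "\<not> f dvd q"
  proof
    assume "f dvd q"
    then obtain t where "q = f * t"
      by (elim dvdE)
    then have "[:a:] * f = (h * t) * f"
      using q by (simp add: ac_simps)
    then have "h dvd [:a:]"
      using f_nonzero mult_right_cancel by (metis dvd_triv_left)
    then have "degree h = 0"
      using dvd_imp_degree_le[of h "[:a:]"] a(1) by simp
    then show False
      using h by (metis degree_eq_zeroE ipoly_const of_int_eq_0_iff pCons_0_0)
  qed
  moreover have "f dvd h * q"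
    unfolding q[symmetric] by (rule dvd_smult) simp
  ultimately have "f dvd h"
    using irreducible_imp_prime_elem[OF irreducible_f] by (auto simp: prime_elem_dvd_mult_iff)
  moreover obtain b where "b \<noteq> 0" "h dvd smult b g"
    using minimal_root_poly_dvd_smult[of h \<gamma> g] h minimal assms by blast
  ultimately show ?thesis
    using dvd_smult_imp_dvd[of b g] by (auto intro: dvd_trans)
qed

lemma root_eq_smult:
  assumes "\<forall>i>n. coeff g i = 0" "ipoly g \<gamma> = 0"
  obtains t where "g = smult t f"
proof -
  obtain h where h: "g = f * h"
    using dvd_of_root[OF assms(2)] by (elim dvdE)
  show ?thesis
  proof (cases "h = 0")
    case False
    then have "degree g = n + degree h"
      using h f_nonzero degree_f by (simp add: degree_mult_eq)
    moreover have "degree g \<le> n"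
      using assms(1) by (simp add: degree_le)
    ultimately obtain t where "h = [:t:]"
      by (metis add_le_same_cancel1 degree_eq_zeroE le_zero_eq)
    then show ?thesis
      using h by (intro that[of t]) simp
  qed (use h in \<open>auto intro: that[of 0]\<close>)
qed


section \<open>The order \<open>\<int> + D\<close>\<close>

abbreviation K :: "complex set" where
  "K \<equiv> numfield \<gamma>"

abbreviation W :: "nat \<Rightarrow> complex set" where
  "W m \<equiv> zspan (\<lambda>i. \<gamma> ^ i) m"

abbreviation M :: "complex set" where
  "M \<equiv> W n"

definition P :: "nat \<Rightarrow> complex" where
  "P j = (\<Sum>k\<le>j. of_int (coeff f (n - k)) * \<gamma> ^ (j - k))"

definition Q :: "nat \<Rightarrow> complex" where
  "Q j = (\<Sum>k\<le>j. of_int (coeff f (j - k)) * inverse \<gamma> ^ k)"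

abbreviation D :: "complex set" where
  "D \<equiv> zspan P n"

abbreviation N :: "complex set" where
  "N \<equiv> zspan Q n"

abbreviation A :: "complex set" where
  "A \<equiv> setadd Zset D"

lemma P_0: "P 0 = of_int (coeff f n)"
  by (simp add: P_def)

lemma Q_0: "Q 0 = of_int (coeff f 0)"
  by (simp add: Q_def)

lemma P_Suc: "P (Suc j) = \<gamma> * P j + of_int (coeff f (n - Suc j))"
  unfolding P_def sum_distrib_left by (simp add: Suc_diff_le algebra_simps)

lemma P_minus_lead_in_W: "P j - of_int (coeff f n) * \<gamma> ^ j \<in> W j"
proof (cases j)
  case (Suc j')
  have "P j - of_int (coeff f n) * \<gamma> ^ j = (\<Sum>k\<le>j'. of_int (coeff f (n - Suc k)) * \<gamma> ^ (j' - k))"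
    unfolding P_def Suc sum.atMost_Suc_shift by (simp add: Suc_diff_le)
  also have "\<dots> \<in> W j"
    by (rule zmodule_sum[OF zmodule_zspan])
       (auto intro!: zmodule_of_int_mult[OF zmodule_zspan] pow_mem_zspan_powers simp: Suc)
  finally show ?thesis .
qed (simp add: P_0 zmodule_zero[OF zmodule_zspan])

lemma P_in_Zadj: "P j \<in> Zadj \<gamma>"
  unfolding P_def
  by (intro zmodule_sum[OF zmodule_Zadj] zmodule_of_int_mult[OF zmodule_Zadj] pow_in_Zadj)

lemma Q_in_Zadj_inverse: "Q j \<in> Zadj (inverse \<gamma>)"
  unfolding Q_def
  by (intro zmodule_sum[OF zmodule_Zadj] zmodule_of_int_mult[OF zmodule_Zadj] pow_in_Zadj)

text \<open>Both \<open>\<gamma>\<^sup>m Q m\<close> and \<open>\<gamma>\<^sup>m\<^sup>+\<^sup>1 P j\<close> (for \<open>m + j + 1 = n\<close>) are partial sums of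
  \<open>f(\<gamma>) = 0\<close>, and they are complementary.\<close>

lemma gamma_mult_P:
  assumes "j < n"
  shows "\<gamma> * P j = - Q (n - 1 - j)"
proof -
  define m where "m = n - 1 - j"
  have n: "n = m + Suc j"
    using assms by (simp add: m_def)
  let ?F = "\<lambda>i. of_int (coeff f i) * \<gamma> ^ i"
  have "(\<Sum>i\<le>n. ?F i) = 0"
    using root ipoly_eq_sum_coeffs[of "Suc n" f \<gamma>] degree_f
    by (simp add: coeff_eq_0 lessThan_Suc_atMost)
  moreover have "(\<Sum>i\<le>n. ?F i) = (\<Sum>i\<le>m. ?F i) + (\<Sum>i\<in>{Suc m..n}. ?F i)"
    using sum.ub_add_nat[of 0 m ?F "Suc j"] by (simp add: n atLeast0AtMost)
  moreover have "\<gamma> ^ m * Q m = (\<Sum>i\<le>m. ?F i)"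
  proof -
    have "\<gamma> ^ m * Q m = (\<Sum>k\<le>m. ?F (m - k))"
      unfolding Q_def sum_distrib_left
      by (rule sum.cong) (auto simp: power_diff power_inverse gamma_nonzero field_simps)
    also have "\<dots> = (\<Sum>i\<le>m. ?F i)"
      by (rule sum.reindex_bij_witness[of _ "\<lambda>i. m - i" "\<lambda>i. m - i"]) auto
    finally show ?thesis .
  qed
  moreover have "\<gamma> ^ Suc m * P j = (\<Sum>i\<in>{Suc m..n}. ?F i)"
  proof -
    have "\<gamma> ^ Suc m * P j = (\<Sum>k\<le>j. ?F (n - k))"
      unfolding P_def sum_distrib_left
    proof (rule sum.cong)
      fix k assume "k \<in> {..j}"
      then have "\<gamma> ^ Suc m * \<gamma> ^ (j - k) = \<gamma> ^ (n - k)"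
        by (simp add: n Suc_diff_le flip: power_add)
      then show "\<gamma> ^ Suc m * (of_int (coeff f (n - k)) * \<gamma> ^ (j - k)) = ?F (n - k)"
        by (simp add: ac_simps)
    qed simp
    also have "\<dots> = (\<Sum>i\<in>{Suc m..n}. ?F i)"
      by (rule sum.reindex_bij_witness[of _ "\<lambda>i. n - i" "\<lambda>i. n - i"]) (auto simp: n)
    finally show ?thesis .
  qed
  ultimately have "\<gamma> ^ m * (Q m + \<gamma> * P j) = 0"
    by (simp add: algebra_simps)
  then show ?thesis
    using gamma_nonzero by (simp add: m_def add_eq_0_iff)
qed


lemma P_in_D: "j < n \<Longrightarrow> P j \<in> D"
  and Q_in_N: "j < n \<Longrightarrow> Q j \<in> N"
  by (simp_all add: zspan_generator)

lemma zmodule_A: "zmodule A"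
  by (intro zmodule_setadd zmodule_Zset zmodule_zspan)

lemma Zset_subset_A: "Zset \<subseteq> A"
  by (intro subset_setadd_left zmodule_zero[OF zmodule_zspan])

lemma of_int_in_A: "of_int k \<in> A"
  using Zset_subset_A by auto

lemma D_subset_A: "D \<subseteq> A"
  by (intro subset_setadd_right zmodule_zero[OF zmodule_Zset])

lemma N_eq_gamma_D: "N = (\<lambda>x. \<gamma> * x) ` D"
proof
  show "N \<subseteq> (\<lambda>x. \<gamma> * x) ` D"
  proof (rule zspan_subsetI[OF zmodule_image_mult[OF zmodule_zspan]])
    fix i assume "i < n"
    then have "Q i = \<gamma> * - P (n - 1 - i)" and "- P (n - 1 - i) \<in> D"
      using gamma_mult_P[of "n - 1 - i"] zmodule_uminus[OF zmodule_zspan P_in_D, of "n - 1 - i"]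
      by auto
    then show "Q i \<in> (\<lambda>x. \<gamma> * x) ` D"
      by blast
  qed
  have "D \<subseteq> {y. \<gamma> * y \<in> N}"
    by (rule zspan_subsetI[OF zmodule_preimage_mult[OF zmodule_zspan]])
       (auto simp: gamma_mult_P intro!: zmodule_uminus[OF zmodule_zspan] Q_in_N)
  then show "(\<lambda>x. \<gamma> * x) ` D \<subseteq> N"
    by blast
qed

lemma gamma_mult_D_in_A: "d \<in> D \<Longrightarrow> \<gamma> * d \<in> A"
proof -
  have "D \<subseteq> {y. \<gamma> * y \<in> A}"
  proof (rule zspan_subsetI[OF zmodule_preimage_mult[OF zmodule_A]])
    fix j assume j: "j < n"
    show "P j \<in> {y. \<gamma> * y \<in> A}"
    proof (cases "Suc j < n")
      case True
      have "\<gamma> * P j = P (Suc j) - of_int (coeff f (n - Suc j))"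
        by (simp add: P_Suc)
      moreover have "P (Suc j) \<in> A"
        using True P_in_D D_subset_A by blast
      ultimately show ?thesis
        using zmodule_diff[OF zmodule_A] of_int_in_A by simp
    next
      case False
      then have "\<gamma> * P j = of_int (- coeff f 0)"
        using gamma_mult_P[OF j] Q_0 by (simp add: Suc_diff_Suc)
      then show ?thesis
        using of_int_in_A[of "- coeff f 0"] by simp
    qed
  qed
  then show "d \<in> D \<Longrightarrow> \<gamma> * d \<in> A"
    by blast
qed

lemma N_subset_A: "N \<subseteq> A"
  using gamma_mult_D_in_A by (auto simp: N_eq_gamma_D)

lemma setadd_Zset_N: "setadd Zset N = A"
proof
  show "setadd Zset N \<subseteq> A"
    by (intro setadd_subsetI Zset_subset_A N_subset_A zmodule_A)
  have ZN: "zmodule (setadd Zset N)"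
    by (intro zmodule_setadd zmodule_Zset zmodule_zspan)
  have Z_ZN: "Zset \<subseteq> setadd Zset N"
    by (intro subset_setadd_left zmodule_zero[OF zmodule_zspan])
  have "D \<subseteq> setadd Zset N"
  proof (rule zspan_subsetI[OF ZN])
    fix j assume j: "j < n"
    show "P j \<in> setadd Zset N"
    proof (cases j)
      case 0
      then show ?thesis
        using Z_ZN by (auto simp: P_0)
    next
      case (Suc j')
      then have "P j = of_int (coeff f (n - Suc j')) + \<gamma> * P j'" and "\<gamma> * P j' \<in> N"
        using P_Suc[of j'] N_eq_gamma_D P_in_D[of j'] j by auto
      then show ?thesis
        by (simp add: setaddI)
    qed
  qed
  then show "A \<subseteq> setadd Zset N"
    by (intro setadd_subsetI Z_ZN ZN)
qed

lemma A_subset_Zadj_Int: "A \<subseteq> Zadj \<gamma> \<inter> Zadj (inverse \<gamma>)"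
proof -
  have Z: "zmodule (Zadj \<gamma> \<inter> Zadj (inverse \<gamma>))"
    by (intro zmodule_Int zmodule_Zadj)
  have "D \<subseteq> Zadj \<gamma> \<inter> Zadj (inverse \<gamma>)"
  proof (rule zspan_subsetI[OF Z])
    fix j assume "j < n"
    then have "P j = - (inverse \<gamma> * Q (n - 1 - j))"
      using gamma_mult_P[of j] gamma_nonzero by (simp add: field_simps)
    then have "P j \<in> Zadj (inverse \<gamma>)"
      using zmodule_uminus[OF zmodule_Zadj] Zadj_mult pow_in_Zadj[of "inverse \<gamma>" 1] Q_in_Zadj_inverse
      by simp
    then show "P j \<in> Zadj \<gamma> \<inter> Zadj (inverse \<gamma>)"
      using P_in_Zadj by blast
  qed
  moreover have "Zset \<subseteq> Zadj \<gamma> \<inter> Zadj (inverse \<gamma>)"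
    using of_int_in_Zadj by (auto simp: Zset_def)
  ultimately show ?thesis
    using Z by (intro setadd_subsetI)
qed

text \<open>If \<open>y = c(\<gamma>)\<close> and \<open>\<gamma>\<^sup>m y = e(\<gamma>)\<close> with \<open>deg e < n + m\<close>, then \<open>X\<^sup>m c - e = f h\<close>;
  subtracting from \<open>c\<close> the multiple of \<open>f\<close> by the part of \<open>h\<close> of degree \<open>\<ge> m\<close> leaves a
  representation of \<open>y\<close> of degree \<open>< n\<close>.\<close>

lemma mem_M_of_pow_mult:
  assumes y: "y \<in> Zadj \<gamma>" and shift: "\<gamma> ^ m * y \<in> W (n + m)"
  shows "y \<in> M"
proof -
  obtain c where c: "y = ipoly c \<gamma>"
    using y by (auto simp: Zadj_eq_range)
  obtain e where e: "\<forall>i\<ge>n + m. coeff e i = 0" "ipoly e \<gamma> = \<gamma> ^ m * y"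
    using shift by (auto simp: mem_zspan_powers_iff)
  have "ipoly (monom 1 m * c - e) \<gamma> = 0"
    using c e by simp
  then obtain h where h: "monom 1 m * c - e = f * h"
    using dvd_of_root by (blast elim: dvdE)
  define r where "r = c - f * poly_shift m h"
  have "f * h = f * poly_cutoff m h + f * (monom 1 m * poly_shift m h)"
    using arg_cong[OF poly_cutoff_plus_shift[of h m], of "\<lambda>x. f * x"] by (simp add: distrib_left)
  then have "monom 1 m * r = f * poly_cutoff m h + e"
    using h by (simp add: r_def algebra_simps)
  then have "coeff r i = coeff (f * poly_cutoff m h) (i + m) + coeff e (i + m)" for i
    by (metis coeff_add coeff_monom_mult add_diff_cancel_right' le_add2 mult_1 not_less)
  then have "\<forall>i\<ge>n. coeff r i = 0"
    using e(1) coeff_mult_eq_0_above[of m "poly_cutoff m h" f] degree_f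
    by (simp add: coeff_poly_cutoff)
  moreover have "ipoly r \<gamma> = y"
    using c root by (simp add: r_def)
  ultimately show ?thesis
    by (auto simp: mem_zspan_powers_iff)
qed

lemma Zadj_Int_subset_colon: "Zadj \<gamma> \<inter> Zadj (inverse \<gamma>) \<subseteq> colon K M M"
proof
  fix x assume x: "x \<in> Zadj \<gamma> \<inter> Zadj (inverse \<gamma>)"
  then obtain m where m: "x \<in> zspan (\<lambda>i. inverse \<gamma> ^ i) (Suc m)"
    using Zadj_iff_zspan zspan_mono[of _ "Suc _"] by (metis IntD2 le_add2 plus_1_eq_Suc subsetD)
  have "x * \<gamma> ^ i \<in> M" if "i < n" for i
  proof (rule mem_M_of_pow_mult)
    show "x * \<gamma> ^ i \<in> Zadj \<gamma>"
      using x by (auto intro: Zadj_mult pow_in_Zadj)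
    have "\<gamma> ^ i * (\<gamma> ^ m * x) \<in> W (Suc m + i)"
      using pow_mult_zspan_inverse_powers[OF gamma_nonzero m] by (rule pow_mult_zspan_powers)
    also have "\<dots> \<subseteq> W (n + m)"
      using that by (intro zspan_mono) simp
    finally show "\<gamma> ^ m * (x * \<gamma> ^ i) \<in> W (n + m)"
      by (simp add: ac_simps)
  qed
  then have "M \<subseteq> {y. x * y \<in> M}"
    by (intro zspan_subsetI[OF zmodule_preimage_mult[OF zmodule_zspan]]) auto
  then show "x \<in> colon K M M"
    using x Zadj_subset_numfield by (auto simp: colon_def)
qed

lemma A_subset_colon: "A \<subseteq> colon K M M"
  using A_subset_Zadj_Int Zadj_Int_subset_colon by blast

lemma colon_subset_M: "colon K M M \<subseteq> M"
  using pow_mem_zspan_powers[of 0 n \<gamma>] two_le_n by (intro colon_subset_self) simp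

lemma colon_mult_pow: "x \<in> colon K M M \<Longrightarrow> i < n \<Longrightarrow> x * \<gamma> ^ i \<in> M"
  by (auto simp: colon_def intro: pow_mem_zspan_powers)

lemma lead_coeff_dvd_of_mem_M:
  assumes "of_int c * \<gamma> ^ n \<in> M"
  shows "coeff f n dvd c"
proof -
  obtain e where e: "\<forall>i\<ge>n. coeff e i = 0" "ipoly e \<gamma> = of_int c * \<gamma> ^ n"
    using assms by (auto simp: mem_zspan_powers_iff)
  have "\<forall>i>n. coeff (monom c n - e) i = 0" "ipoly (monom c n - e) \<gamma> = 0"
    using e by (auto simp: coeff_monom)
  then obtain t where "monom c n - e = smult t f"
    by (rule root_eq_smult)
  then have "coeff (monom c n - e) n = t * coeff f n"
    by simp
  then have "c = t * coeff f n"
    using e(1) by simp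
  then show ?thesis
    by simp
qed

lemma const_coeff_dvd_of_mem_M:
  assumes "of_int c * inverse \<gamma> \<in> M"
  shows "coeff f 0 dvd c"
proof -
  obtain e where e: "\<forall>i\<ge>n. coeff e i = 0" "ipoly e \<gamma> = of_int c * inverse \<gamma>"
    using assms by (auto simp: mem_zspan_powers_iff)
  have "\<forall>i>n. coeff ([:c:] - monom 1 1 * e) i = 0" "ipoly ([:c:] - monom 1 1 * e) \<gamma> = 0"
    using e gamma_nonzero by (auto simp: coeff_monom_mult coeff_pCons split: nat.split)
  then obtain t where "[:c:] - monom 1 1 * e = smult t f"
    by (rule root_eq_smult)
  then have "coeff ([:c:] - monom 1 1 * e) 0 = t * coeff f 0"
    by simp
  then have "c = t * coeff f 0"
    by (simp add: coeff_monom_mult)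
  then show ?thesis
    by simp
qed


text \<open>Multiplying \<open>x\<close> by \<open>\<gamma>\<^sup>n\<^sup>-\<^sup>k\<^sup>-\<^sup>1\<close> stays in \<open>M\<close>, which forces the top coefficient of \<open>x\<close>
  to be a multiple of the leading coefficient of \<open>f\<close>, the top coefficient of \<open>P (k + 1)\<close>.\<close>

lemma colon_remove_top_coeff:
  assumes x: "x \<in> colon K M M" "x \<in> W (Suc (Suc k))" and k: "Suc k < n"
  obtains t where "x - of_int t * P (Suc k) \<in> W (Suc k)"
proof -
  obtain x0 c where x0: "x0 \<in> W (Suc k)" "x = x0 + of_int c * \<gamma> ^ Suc k"
    using x(2) by (rule zspan_SucE)
  define d where "d = n - Suc k"
  have d: "d < n" "Suc k + d = n"
    using k by (auto simp: d_def)
  have "x * \<gamma> ^ d \<in> M"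
    using x(1) d(1) by (rule colon_mult_pow)
  moreover have "\<gamma> ^ d * x0 \<in> M"
    using pow_mult_zspan_powers[OF x0(1), of d] d(2) by simp
  moreover have "of_int c * \<gamma> ^ n = x * \<gamma> ^ d - \<gamma> ^ d * x0"
    by (simp add: x0(2) algebra_simps flip: d(2) power_add)
  ultimately have "of_int c * \<gamma> ^ n \<in> M"
    by (simp add: zmodule_diff[OF zmodule_zspan])
  then obtain t where t: "c = coeff f n * t"
    using lead_coeff_dvd_of_mem_M by (blast elim: dvdE)
  have "x - of_int t * P (Suc k) = x0 - of_int t * (P (Suc k) - of_int (coeff f n) * \<gamma> ^ Suc k)"
    by (simp add: x0(2) t algebra_simps)
  also have "\<dots> \<in> W (Suc k)"
    by (rule zmodule_diff[OF zmodule_zspan x0(1) zmodule_of_int_mult[OF zmodule_zspan P_minus_lead_in_W]])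
  finally show ?thesis
    by (rule that)
qed

lemma colon_subset_A: "colon K M M \<subseteq> A"
proof -
  have main: "x \<in> A" if "x \<in> colon K M M" "x \<in> W (Suc k)" "k < n" for x k
    using that
  proof (induction k arbitrary: x)
    case 0
    have "W 1 \<subseteq> Zset"
      by (rule zspan_subsetI[OF zmodule_Zset]) (simp add: Zset_def range_eqI[of _ _ 1])
    then show ?case
      using 0 Zset_subset_A by auto
  next
    case (Suc k)
    obtain t where t: "x - of_int t * P (Suc k) \<in> W (Suc k)"
      using colon_remove_top_coeff Suc.prems by blast
    have PA: "of_int t * P (Suc k) \<in> A"
      using Suc.prems(3) P_in_D D_subset_A zmodule_of_int_mult[OF zmodule_A] by blast
    have "x - of_int t * P (Suc k) \<in> colon K M M"
      using Suc.prems(1) PA A_subset_colon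
      by (intro zmodule_diff[OF zmodule_colon[OF zmodule_numfield zmodule_zspan]]) auto
    then have "x - of_int t * P (Suc k) \<in> A"
      using Suc.IH t Suc.prems(3) by simp
    from zmodule_add[OF zmodule_A this PA] show ?case
      by simp
  qed
  have "Suc (n - 1) = n"
    using two_le_n by simp
  then show ?thesis
    using main[of _ "n - 1"] colon_subset_M two_le_n by auto
qed

lemma A_eq_colon: "A = colon K M M"
  using A_subset_colon colon_subset_A by blast

lemma A_eq_Zadj_Int: "A = Zadj \<gamma> \<inter> Zadj (inverse \<gamma>)"
  using A_subset_Zadj_Int Zadj_Int_subset_colon colon_subset_A by blast


lemma gamma_in_K: "\<gamma> \<in> K"
  using pow_in_Zadj[of \<gamma> 1] Zadj_subset_numfield by auto

lemma A_subset_K: "A \<subseteq> K"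
  by (auto simp: A_eq_colon colon_def)

lemma A_mult: "x \<in> A \<Longrightarrow> y \<in> A \<Longrightarrow> x * y \<in> A"
  unfolding A_eq_colon colon_def by (auto simp: numfield_mult mult.assoc)

lemma one_in_A: "1 \<in> A"
  using of_int_in_A[of 1] by simp

lemma ring_A: "ring (subring_struct A)"
  by (intro ring_subring_struct zmodule_A one_in_A A_mult)

lemma lead_coeff_dvd_of_gamma_mult_in_A:
  assumes "\<gamma> * of_int c \<in> A"
  shows "coeff f n dvd c"
proof -
  have "\<gamma> * of_int c * \<gamma> ^ (n - 1) \<in> M"
    using assms two_le_n by (simp add: A_eq_colon colon_mult_pow)
  moreover obtain m where "n = Suc m"
    using two_le_n by (cases n) auto
  ultimately have "of_int c * \<gamma> ^ n \<in> M"
    by (simp add: algebra_simps)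
  then show ?thesis
    by (rule lead_coeff_dvd_of_mem_M)
qed

lemma mem_D_of_gamma_mult:
  assumes "x \<in> A" "\<gamma> * x \<in> A"
  shows "x \<in> D"
proof -
  obtain c d where cd: "d \<in> D" "x = of_int c + d"
    using assms(1) by (auto simp: Zset_def elim!: setaddE)
  have "\<gamma> * of_int c = \<gamma> * x - \<gamma> * d"
    by (simp add: cd(2) algebra_simps)
  then have "\<gamma> * of_int c \<in> A"
    using zmodule_diff[OF zmodule_A assms(2) gamma_mult_D_in_A[OF cd(1)]] by simp
  then obtain t where "c = coeff f n * t"
    by (blast elim: dvdE dest: lead_coeff_dvd_of_gamma_mult_in_A)
  then have "of_int c = of_int t * P 0"
    by (simp add: P_0)
  then have "of_int c \<in> D"
    using zmodule_of_int_mult[OF zmodule_zspan P_in_D] two_le_n by simp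
  then show ?thesis
    using zmodule_add[OF zmodule_zspan _ cd(1)] cd(2) by simp
qed

lemma A_mult_D:
  assumes "r \<in> A" "d \<in> D"
  shows "r * d \<in> D"
proof (rule mem_D_of_gamma_mult)
  show "r * d \<in> A"
    using assms D_subset_A A_mult by blast
  have "r * (\<gamma> * d) \<in> A"
    using assms gamma_mult_D_in_A A_mult by blast
  then show "\<gamma> * (r * d) \<in> A"
    by (simp add: ac_simps)
qed

lemma A_mult_N: "r \<in> A \<Longrightarrow> y \<in> N \<Longrightarrow> r * y \<in> N"
  unfolding N_eq_gamma_D using A_mult_D by (auto simp: mult.left_commute)

lemma ideal_D: "ideal D (subring_struct A)"
  by (intro ideal_subring_struct ring_A D_subset_A zmodule_zspan A_mult_D)

lemma ideal_N: "ideal N (subring_struct A)"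
  by (intro ideal_subring_struct ring_A N_subset_A zmodule_zspan A_mult_N)

lemma coeff_in_setadd_N_D: "of_int (coeff f i) \<in> setadd N D"
proof -
  consider "i = 0" | "0 < i" "i < n" | "i = n" | "n < i"
    by linarith
  then show ?thesis
  proof cases
    case 1
    then show ?thesis
      using setaddI[OF Q_in_N[of 0] zmodule_zero[OF zmodule_zspan]] Q_0 two_le_n by simp
  next
    case 2
    then have "Q i + P (n - i) = of_int (coeff f i)"
      using P_Suc[of "n - 1 - i"] gamma_mult_P[of "n - 1 - i"] by (simp add: Suc_diff_Suc)
    then show ?thesis
      using 2 setaddI[OF Q_in_N P_in_D, of i "n - i"] by simp
  next
    case 3
    then show ?thesis
      using setaddI[OF zmodule_zero[OF zmodule_zspan] P_in_D[of 0]] P_0 two_le_n by simp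
  next
    case 4
    then show ?thesis
      using setaddI[OF zmodule_zero[OF zmodule_zspan] zmodule_zero[OF zmodule_zspan]] degree_f
      by (simp add: coeff_eq_0)
  qed
qed

lemma setadd_N_D: "setadd N D = A"
proof
  have ND: "zmodule (setadd N D)"
    by (intro zmodule_setadd zmodule_zspan)
  show "setadd N D \<subseteq> A"
    by (intro setadd_subsetI N_subset_A D_subset_A zmodule_A)
  have "content f = 1"
    using nonconst_poly_irreducible_iff[of f] irreducible_f degree_f two_le_n by simp
  moreover have "of_int (Gcd (set (coeffs f))) \<in> setadd N D"
    using forall_coeffs_conv[of "\<lambda>c. of_int c \<in> setadd N D" f] coeff_in_setadd_N_D
    by (intro of_int_Gcd_mem ND) (auto simp: zmodule_zero[OF ND])
  ultimately have "1 \<in> setadd N D"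
    by (simp add: content_def Gcd_fin_eq_Gcd)
  then have "Zset \<subseteq> setadd N D"
    by (rule Zset_subset[OF ND])
  moreover have "D \<subseteq> setadd N D"
    by (intro subset_setadd_right zmodule_zero[OF zmodule_zspan])
  ultimately show "A \<subseteq> setadd N D"
    by (intro setadd_subsetI ND)
qed

lemma invertible_N: "invertible_ideal K A N"
proof (rule invertible_idealI[where c = "inverse \<gamma>"])
  have "(\<lambda>x. inverse \<gamma> * (\<gamma> * x)) = id"
    using gamma_nonzero by (simp add: fun_eq_iff field_simps)
  then have "(\<lambda>x. inverse \<gamma> * x) ` N = D"
    unfolding N_eq_gamma_D image_image by (simp only: image_id id_apply)
  then show "setadd N ((\<lambda>x. inverse \<gamma> * x) ` N) = A"
    by (simp add: setadd_N_D)
qed (auto simp: numfield_add numfield_mult zmodule_A one_in_A A_mult A_subset_K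
    inverse_in_numfield gamma_nonzero zmodule_zspan)

lemma invertible_D: "invertible_ideal K A D"
proof (rule invertible_idealI[where c = \<gamma>])
  show "setadd D ((\<lambda>x. \<gamma> * x) ` D) = A"
    by (simp add: setadd_commute setadd_N_D flip: N_eq_gamma_D)
qed (auto simp: numfield_add numfield_mult zmodule_A one_in_A A_mult A_subset_K zmodule_zspan gamma_in_K)

lemma Quot_N_iso: "subring_struct A Quot N \<simeq> ZFact (coeff f 0)"
proof (rule subring_struct_Quot_iso_ZFact[OF ring_A ideal_N of_int_in_A])
  fix x assume "x \<in> A"
  then have "x \<in> setadd Zset N"
    by (simp add: setadd_Zset_N)
  then obtain k y where "y \<in> N" "x = of_int k + y"
    by (auto simp: Zset_def elim!: setaddE)
  then show "\<exists>k. x - of_int k \<in> N"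
    by (intro exI[of _ k]) simp
next
  fix k
  show "of_int k \<in> N \<longleftrightarrow> coeff f 0 dvd k"
  proof
    assume "of_int k \<in> N"
    then obtain d where d: "d \<in> D" "of_int k = \<gamma> * d"
      by (auto simp: N_eq_gamma_D)
    have "of_int k * inverse \<gamma> = d"
      using d(2) gamma_nonzero by (simp add: field_simps)
    moreover have "d \<in> M"
      using d(1) D_subset_A A_subset_colon colon_subset_M by blast
    ultimately have "of_int k * inverse \<gamma> \<in> M"
      by (simp only:)
    then show "coeff f 0 dvd k"
      by (rule const_coeff_dvd_of_mem_M)
  next
    assume "coeff f 0 dvd k"
    then obtain t where "k = coeff f 0 * t"
      by (elim dvdE)
    then have "of_int k = of_int t * Q 0"
      by (simp add: Q_0)
    then show "of_int k \<in> N"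
      using zmodule_of_int_mult[OF zmodule_zspan Q_in_N] two_le_n by simp
  qed
qed

lemma Quot_D_iso: "subring_struct A Quot D \<simeq> ZFact (coeff f n)"
proof (rule subring_struct_Quot_iso_ZFact[OF ring_A ideal_D of_int_in_A])
  fix x assume "x \<in> A"
  then obtain k y where "y \<in> D" "x = of_int k + y"
    by (auto simp: Zset_def elim!: setaddE)
  then show "\<exists>k. x - of_int k \<in> D"
    by (intro exI[of _ k]) simp
next
  fix k
  show "of_int k \<in> D \<longleftrightarrow> coeff f n dvd k"
  proof
    assume "of_int k \<in> D"
    then show "coeff f n dvd k"
      by (intro lead_coeff_dvd_of_gamma_mult_in_A gamma_mult_D_in_A)
  next
    assume "coeff f n dvd k"
    then obtain t where "k = coeff f n * t"
      by (elim dvdE)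
    then have "of_int k = of_int t * P 0"
      by (simp add: P_0)
    then show "of_int k \<in> D"
      using zmodule_of_int_mult[OF zmodule_zspan P_in_D] two_le_n by simp
  qed
qed

lemma colon_N_D: "colon K N D = (\<lambda>x. \<gamma> * x) ` A"
proof
  show "(\<lambda>x. \<gamma> * x) ` A \<subseteq> colon K N D"
  proof
    fix z assume "z \<in> (\<lambda>x. \<gamma> * x) ` A"
    then obtain r where r: "r \<in> A" "z = \<gamma> * r"
      by blast
    have "z \<in> K"
      using r A_subset_K numfield_mult[OF gamma_in_K] by auto
    moreover have "z * d \<in> N" if "d \<in> D" for d
    proof -
      have "\<gamma> * d \<in> N"
        unfolding N_eq_gamma_D using that by (rule imageI)
      from A_mult_N[OF r(1) this] show ?thesis
        by (simp add: r(2) ac_simps)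
    qed
    ultimately show "z \<in> colon K N D"
      by (auto simp: colon_def)
  qed
  show "colon K N D \<subseteq> (\<lambda>x. \<gamma> * x) ` A"
  proof
    fix x assume x: "x \<in> colon K N D"
    have "1 \<in> setadd N D"
      by (simp add: setadd_N_D one_in_A)
    then obtain d' d where d: "d' \<in> D" "d \<in> D" "1 = \<gamma> * d' + d"
      by (auto simp: N_eq_gamma_D elim!: setaddE)
    obtain d'' where d'': "d'' \<in> D" "x * d = \<gamma> * d''"
      using x d(2) by (auto simp: colon_def N_eq_gamma_D)
    have "x * d' \<in> A"
      using x d(1) N_subset_A by (auto simp: colon_def)
    then have "x * d' + d'' \<in> A"
      using zmodule_add[OF zmodule_A] D_subset_A d''(1) by blast
    moreover have "x = \<gamma> * (x * d' + d'')"
      using arg_cong[OF d(3), of "\<lambda>y. x * y"] d''(2) by (simp add: algebra_simps)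
    ultimately show "x \<in> (\<lambda>x. \<gamma> * x) ` A"
      by blast
  qed
qed


section \<open>The blow-up of \<open>\<int> + \<int>\<gamma>\<close>\<close>

lemma setpow_W2: "1 \<le> k \<Longrightarrow> setpow K (W 2) k = W (Suc k)"
proof (induction k rule: dec_induct)
  case base
  have "setmul (colon K (W 2) (W 2)) (W 2) = W 2"
  proof
    show "setmul (colon K (W 2) (W 2)) (W 2) \<subseteq> W 2"
      by (rule setmul_subsetI[OF zmodule_zspan]) (auto simp: colon_def)
    show "W 2 \<subseteq> setmul (colon K (W 2) (W 2)) (W 2)"
      using mult_mem_setmul[OF one_in_colon_numfield] by fastforce
  qed
  then show ?case
    by (simp add: numeral_2_eq_2)
next
  case (step k)
  have "setmul (W (Suc k)) (W 2) = W (Suc (Suc k))"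
  proof
    show "setmul (W (Suc k)) (W 2) \<subseteq> W (Suc (Suc k))"
      using mult_zspan_powers[of _ \<gamma> k _ 1]
      by (intro setmul_subsetI[OF zmodule_zspan]) (simp add: numeral_2_eq_2)
    show "W (Suc (Suc k)) \<subseteq> setmul (W (Suc k)) (W 2)"
    proof (rule zspan_subsetI[OF zmodule_setmul[OF zmodule_zspan]])
      fix i assume "i < Suc (Suc k)"
      then consider "i < Suc k" | "i = Suc k"
        by linarith
      then show "\<gamma> ^ i \<in> setmul (W (Suc k)) (W 2)"
      proof cases
        case 1
        then have "\<gamma> ^ i * \<gamma> ^ 0 \<in> setmul (W (Suc k)) (W 2)"
          by (intro mult_mem_setmul pow_mem_zspan_powers) simp_all
        then show ?thesis
          by simp
      next
        case 2
        have "\<gamma> ^ k * \<gamma> ^ 1 \<in> setmul (W (Suc k)) (W 2)"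
          by (intro mult_mem_setmul pow_mem_zspan_powers) simp_all
        then show ?thesis
          by (simp add: 2 mult.commute)
      qed
    qed
  qed
  then show ?case
    using step.IH by simp
qed

lemma colon_W_subset_A: "colon K (W (Suc k)) (W (Suc k)) \<subseteq> A"
proof
  fix x assume x: "x \<in> colon K (W (Suc k)) (W (Suc k))"
  then have "x * 1 \<in> W (Suc k)" and xk: "x * \<gamma> ^ k \<in> W (Suc k)"
    using pow_mem_zspan_powers[of 0 "Suc k" \<gamma>] pow_mem_zspan_powers[of k "Suc k" \<gamma>]
    by (auto simp: colon_def)
  then have "x \<in> Zadj \<gamma>"
    using zspan_powers_subset_Zadj by auto
  moreover have "x \<in> Zadj (inverse \<gamma>)"
  proof -
    have "inverse \<gamma> ^ k * (x * \<gamma> ^ k) \<in> zspan (\<lambda>i. inverse \<gamma> ^ i) (Suc k)"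
      using pow_mult_zspan_inverse_powers[of "inverse \<gamma>"] xk gamma_nonzero by simp
    moreover have "inverse \<gamma> ^ k * (x * \<gamma> ^ k) = x"
      using gamma_nonzero by (simp add: power_inverse field_simps)
    ultimately show ?thesis
      using zspan_powers_subset_Zadj by auto
  qed
  ultimately show "x \<in> A"
    by (simp add: A_eq_Zadj_Int)
qed

lemma Bl_W2_eq_A: "Bl K (W 2) = A"
proof
  show "Bl K (W 2) \<subseteq> A"
  proof
    fix x assume "x \<in> Bl K (W 2)"
    then obtain k where k: "x \<in> colon K (setpow K (W 2) k) (setpow K (W 2) k)"
      by (auto simp: Bl_def)
    show "x \<in> A"
    proof (cases k)
      case 0
      have "x \<in> colon K (W 2) (W 2)"
        using k 0 colon_subset_self[OF one_in_colon_numfield] by auto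
      then show ?thesis
        using colon_W_subset_A[of 1] by (auto simp: numeral_2_eq_2)
    next
      case (Suc k')
      then show ?thesis
        using k setpow_W2[of k] colon_W_subset_A by auto
    qed
  qed
  have "setpow K (W 2) (n - 1) = M"
    using setpow_W2[of "n - 1"] two_le_n by simp
  then have "A = colon K (setpow K (W 2) (n - 1)) (setpow K (W 2) (n - 1))"
    by (simp add: A_eq_colon)
  then show "A \<subseteq> Bl K (W 2)"
    unfolding Bl_def by blast
qed

end

theorem theorem4p59:
  fixes f :: "int poly" and \<gamma> :: complex and n :: nat
  assumes deg: "degree f = n" and n2: "n \<ge> 2"
    and irr: "irreducible f"
    and root: "poly (map_poly of_int f) \<gamma> = 0"
  defines "K \<equiv> numfield \<gamma>"
    and "a \<equiv> (\<lambda>i. coeff f i)"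
  defines "p \<equiv> (\<lambda>j. \<Sum>k\<le>j. of_int (a (n - k)) * \<gamma> ^ (j - k))"
    and "q \<equiv> (\<lambda>j. \<Sum>k\<le>j. of_int (a (j - k)) * (inverse \<gamma>) ^ k)"
  defines "M \<equiv> zspan (\<lambda>i. \<gamma> ^ i) n"
    and "D \<equiv> zspan p n"
    and "N \<equiv> zspan q n"
  defines "A \<equiv> Bl K (zspan (\<lambda>i. \<gamma> ^ i) 2)"
  shows "A = colon K M M
       \<and> colon K M M = Zadj \<gamma> \<inter> Zadj (inverse \<gamma>)
       \<and> Zadj \<gamma> \<inter> Zadj (inverse \<gamma>) = setadd Zset N
       \<and> setadd Zset N = setadd Zset D
       \<and> ideal N (subring_struct A) \<and> ideal D (subring_struct A)
       \<and> setadd N D = A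
       \<and> invertible_ideal K A N \<and> invertible_ideal K A D
       \<and> subring_struct A Quot N \<simeq> ZFact (a 0)
       \<and> subring_struct A Quot D \<simeq> ZFact (a n)
       \<and> colon K N D = (\<lambda>x. \<gamma> * x) ` A"
proof -
  interpret irreducible_root f \<gamma> n
    using deg n2 irr root by unfold_locales (simp_all add: ipoly_def)
  have D: "D = zspan P n" and N: "N = zspan Q n"
    unfolding D_def N_def p_def q_def a_def P_def Q_def by simp_all
  have A: "A = setadd Zset (zspan P n)"
    unfolding A_def K_def by (rule Bl_W2_eq_A)
  show ?thesis
    unfolding A D N K_def M_def a_def
    using A_eq_colon A_eq_Zadj_Int setadd_Zset_N ideal_N ideal_D setadd_N_D invertible_N invertible_D
      Quot_N_iso Quot_D_iso colon_N_D
    by auto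
qed

end
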